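(* Let $k,a,b$ be positive real numbers. The $k$-FL sequence $\{S^{(a,b)}_{k,n}\}_{n\ge0}$ is a geometric sequence if and only if $a^2=(k^2+4)b^2$. In particular, given a positive real number $k$, there are infinitely many pairs $(a,b)$ such that $\{S^{(a,b)}_{k,n}\}_{n\ge0}$ is a geometric sequence.
   Context: The $k$-FL sequence (for positive reals $k,a,b$) is $S^{(a,b)}_{k,0}=2b$, $S^{(a,b)}_{k,1}=bk+a$, $S^{(a,b)}_{k,n}=kS^{(a,b)}_{k,n-1}+S^{(a,b)}_{k,n-2}$. *)

theory Defs
  imports Complex_Main
begin

fun kFL :: "real \<Rightarrow> real \<Rightarrow> real \<Rightarrow> nat \<Rightarrow> real" where
  "kFL k a b 0 = 2 * b"
| "kFL k a b (Suc 0) = b * k + a"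
| "kFL k a b (Suc (Suc n)) = k * kFL k a b (Suc n) + kFL k a b n"

definition geometric_seq :: "(nat \<Rightarrow> real) \<Rightarrow> bool" where
  "geometric_seq s \<longleftrightarrow> (\<exists>r. \<forall>n. s (Suc n) = r * s n)"

end

theory Submission
  imports Defs
begin

text \<open>The k-FL recurrence preserves any ratio r that is a root of the characteristic polynomial
  x^2 - k x - 1, so the sequence is geometric exactly when S_1 / S_0 = (b k + a) / (2 b) is
  such a root. Writing a = 2 b r - b k, one has a^2 - (k^2 + 4) b^2 = 4 b^2 (r^2 - k r - 1), which
  turns this into the condition a^2 = (k^2 + 4) b^2; its solutions a = sqrt (k^2 + 4) b form a ray.\<close>

lemma kFL_ratio_propagates:
  assumes root: "r\<^sup>2 = k * r + 1"
    and start: "kFL k a b 1 = r * kFL k a b 0"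
  shows "kFL k a b (Suc n) = r * kFL k a b n"
proof (induction n)
  case 0
  then show ?case using start by simp
next
  case (Suc n)
  have "kFL k a b (Suc (Suc n)) = (k * r + 1) * kFL k a b n"
    using Suc.IH by (simp add: algebra_simps)
  also have "\<dots> = r * (r * kFL k a b n)"
    using root by (simp add: power2_eq_square)
  finally show ?case using Suc.IH by simp
qed

lemma geometric_seq_kFL_iff_root:
  assumes "b \<noteq> 0"
  shows "geometric_seq (kFL k a b) \<longleftrightarrow> (\<exists>r. r\<^sup>2 = k * r + 1 \<and> b * k + a = 2 * b * r)"
proof
  assume "geometric_seq (kFL k a b)"
  then obtain r where r: "\<And>n. kFL k a b (Suc n) = r * kFL k a b n"
    unfolding geometric_seq_def by blast
  have first: "b * k + a = 2 * b * r" using r[of 0] by simp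
  have "k * (b * k + a) + 2 * b = r * (b * k + a)" using r[of 1] by simp
  then have "2 * b * r\<^sup>2 = 2 * b * (k * r + 1)"
    unfolding first by (simp add: power2_eq_square algebra_simps)
  then show "\<exists>r. r\<^sup>2 = k * r + 1 \<and> b * k + a = 2 * b * r"
    using first assms by auto
next
  assume "\<exists>r. r\<^sup>2 = k * r + 1 \<and> b * k + a = 2 * b * r"
  then obtain r where "r\<^sup>2 = k * r + 1" "kFL k a b 1 = r * kFL k a b 0"
    by (auto simp: algebra_simps)
  then show "geometric_seq (kFL k a b)"
    unfolding geometric_seq_def using kFL_ratio_propagates by blast
qed

lemma characteristic_root_iff:
  fixes a b k :: real
  assumes "b \<noteq> 0"
  shows "(\<exists>r. r\<^sup>2 = k * r + 1 \<and> b * k + a = 2 * b * r) \<longleftrightarrow> a\<^sup>2 = (k\<^sup>2 + 4) * b\<^sup>2"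
proof -
  define r where "r = (b * k + a) / (2 * b)"
  have a: "a = 2 * b * r - b * k" using assms by (simp add: r_def field_simps)
  have "a\<^sup>2 - (k\<^sup>2 + 4) * b\<^sup>2 = 4 * b\<^sup>2 * (r\<^sup>2 - k * r - 1)"
    unfolding a by (simp add: power2_eq_square algebra_simps)
  moreover have "b * k + a = 2 * b * r' \<longleftrightarrow> r' = r" for r'
    using assms by (auto simp: r_def field_simps)
  ultimately show ?thesis using assms by auto
qed

lemma geometric_seq_kFL_iff:
  assumes "b \<noteq> 0"
  shows "geometric_seq (kFL k a b) \<longleftrightarrow> a\<^sup>2 = (k\<^sup>2 + 4) * b\<^sup>2"
  using geometric_seq_kFL_iff_root[OF assms] characteristic_root_iff[OF assms] by simp

theorem corollary4p20:
  fixes k :: real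
  assumes "k > 0"
  shows "(\<forall>a b. a > 0 \<longrightarrow> b > 0 \<longrightarrow>
            (geometric_seq (kFL k a b) \<longleftrightarrow> a^2 = (k^2 + 4) * b^2))
         \<and> infinite {(a, b). a > 0 \<and> b > 0 \<and> geometric_seq (kFL k a b)}"
proof
  show "\<forall>a b. a > 0 \<longrightarrow> b > 0 \<longrightarrow>
            (geometric_seq (kFL k a b) \<longleftrightarrow> a^2 = (k^2 + 4) * b^2)"
    using geometric_seq_kFL_iff by simp
  define c where "c = sqrt (k\<^sup>2 + 4)"
  have c: "c > 0" "c\<^sup>2 = k\<^sup>2 + 4" unfolding c_def by (auto simp: add_nonneg_pos)
  have "(\<lambda>b. (c * b, b)) ` {0<..} \<subseteq> {(a, b). a > 0 \<and> b > 0 \<and> geometric_seq (kFL k a b)}"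
    using c by (auto simp: geometric_seq_kFL_iff power_mult_distrib)
  moreover have "infinite ((\<lambda>b. (c * b, b)) ` ({0<..} :: real set))"
    using finite_imageD infinite_Ioi by (fastforce simp: inj_on_def)
  ultimately show "infinite {(a, b). a > 0 \<and> b > 0 \<and> geometric_seq (kFL k a b)}"
    using finite_subset by blast
qed

end
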